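(* Let $n\ge 1$ and $A$ be as in the context. A position $P$ of $\mathrm{AGG}(n,A)$ is reachable if and only if the sequence $v_1\le v_2\le\dots\le v_n$ of its cell values, sorted in nondecreasing order with each empty cell counted as value $0$ (so $v_i=0$ exactly when $P$ has at least $i$ empty cells), satisfies $v_i\le \mathrm{Single}(i,A)$ for every $i=1,\dots,n$.
   Context: Let $A$ be a set of positive integers with $1\in A$ (the allowed tile values). For an integer $n\ge 0$, the abstract generalized 2048 game $\mathrm{AGG}(n,A)$ is played on $n$ indistinguishable cells. A position assigns to each cell either nothing (the cell is empty) or a tile carrying a value in $A$. The initial position has all cells empty. A step, which can be performed from any position having at least one empty cell, consists of: (i) placing a new tile of value $1$ into a chosen empty cell; then (ii) optionally choosing any collection of pairwise disjoint sets of nonempty cells such that the sum of the tile values in each chosen set belongs to $A$, and merging each chosen set into a single tile, whose value is that sum, placed in one cell of the set, the other cells of the set becoming empty. The game ends when, after a step, all cells are nonempty (no further step is then possible). A position is reachable if it can be obtained from the initial position by a finite sequence of steps. For $n\ge1$, $\mathrm{Single}(n,A)$ denotes the supremum (possibly $\infty$) of the values $x\in A$ such that the position of $\mathrm{AGG}(n,A)$ with one tile of value $x$ and $n-1$ empty cells is reachable. *)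

theory Defs
  imports Main "HOL-Library.Extended_Nat"
begin

text \<open>Positions of AGG(n,A): cells are 0,...,n-1; a position is a function
  p :: nat => nat where p i = 0 means cell i is empty, p i = x > 0 means cell i
  carries a tile of value x; p i = 0 for i >= n.\<close>

definition is_position :: "nat \<Rightarrow> nat set \<Rightarrow> (nat \<Rightarrow> nat) \<Rightarrow> bool" where
  "is_position n A p \<longleftrightarrow> (\<forall>i. n \<le> i \<longrightarrow> p i = 0) \<and> (\<forall>i<n. p i = 0 \<or> p i \<in> A)"

definition merge_result :: "nat \<Rightarrow> nat set \<Rightarrow> (nat \<Rightarrow> nat) \<Rightarrow> (nat \<Rightarrow> nat) \<Rightarrow> bool" where
  "merge_result n A q q' \<longleftrightarrow>
     (\<exists>C t. (\<forall>S\<in>C. S \<subseteq> {i. i < n \<and> q i \<noteq> 0}) \<and>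
            (\<forall>S\<in>C. \<forall>T\<in>C. S \<noteq> T \<longrightarrow> S \<inter> T = {}) \<and>
            (\<forall>S\<in>C. sum q S \<in> A) \<and>
            (\<forall>S\<in>C. t S \<in> S) \<and>
            (\<forall>S\<in>C. q' (t S) = sum q S \<and> (\<forall>j\<in>S - {t S}. q' j = 0)) \<and>
            (\<forall>j. j \<notin> \<Union>C \<longrightarrow> q' j = q j))"

definition game_step :: "nat \<Rightarrow> nat set \<Rightarrow> (nat \<Rightarrow> nat) \<Rightarrow> (nat \<Rightarrow> nat) \<Rightarrow> bool" where
  "game_step n A p p' \<longleftrightarrow>
     (\<exists>c<n. p c = 0 \<and> merge_result n A (p(c := 1)) p')"

definition reachable :: "nat \<Rightarrow> nat set \<Rightarrow> (nat \<Rightarrow> nat) \<Rightarrow> bool" where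
  "reachable n A p \<longleftrightarrow> (game_step n A)\<^sup>*\<^sup>* (\<lambda>_. 0) p"

definition Single :: "nat \<Rightarrow> nat set \<Rightarrow> enat" where
  "Single n A = Sup {enat x | x. x \<in> A \<and> (\<exists>c<n. reachable n A ((\<lambda>_. 0)(c := x)))}"

end

theory Submission
  imports Defs
begin

text \<open>Call a position admissible if every tile, of value x at sorted position i (ties broken
  towards the smallest position), has x \<in> single_values {..<i}: x can be built as a single tile
  on i cells. Single-tile values are downward closed in A, because any partial total can be merged
  into one tile, so admissibility is the bound v_i \<le> Single(i, A).
  Admissible positions are reachable: build the largest tile first, then the rest on the other
  cells, with the large tile as a static background. Conversely admissibility survives placing a 1
  and, a simultaneous merge being a sequence of single merges, the merge of one set S: the tiles of
  S alone form an admissible position on the cells that do not carry a tile outside S of value at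
  least max S, so by the first part their sum is a single-tile value on that many cells.\<close>

section \<open>The game on an arbitrary set of cells\<close>

text \<open>Subgames are played on subsets of the cells, so the game of Defs is generalised from
  {..<n} to any cell set K.\<close>

definition merge_on :: "nat set \<Rightarrow> nat set \<Rightarrow> (nat \<Rightarrow> nat) \<Rightarrow> (nat \<Rightarrow> nat) \<Rightarrow> bool" where
  "merge_on K A q q' \<longleftrightarrow>
     (\<exists>C t. (\<forall>S\<in>C. S \<subseteq> {i \<in> K. q i \<noteq> 0}) \<and>
            (\<forall>S\<in>C. \<forall>T\<in>C. S \<noteq> T \<longrightarrow> S \<inter> T = {}) \<and>
            (\<forall>S\<in>C. sum q S \<in> A) \<and>
            (\<forall>S\<in>C. t S \<in> S) \<and>
            (\<forall>S\<in>C. q' (t S) = sum q S \<and> (\<forall>j\<in>S - {t S}. q' j = 0)) \<and>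
            (\<forall>j. j \<notin> \<Union>C \<longrightarrow> q' j = q j))"

definition step_on :: "nat set \<Rightarrow> nat set \<Rightarrow> (nat \<Rightarrow> nat) \<Rightarrow> (nat \<Rightarrow> nat) \<Rightarrow> bool" where
  "step_on K A p p' \<longleftrightarrow> (\<exists>c\<in>K. p c = 0 \<and> merge_on K A (p(c := 1)) p')"

definition reachable_on :: "nat set \<Rightarrow> nat set \<Rightarrow> (nat \<Rightarrow> nat) \<Rightarrow> bool" where
  "reachable_on K A p \<longleftrightarrow> (step_on K A)\<^sup>*\<^sup>* (\<lambda>_. 0) p"

definition single_values :: "nat set \<Rightarrow> nat set \<Rightarrow> nat set" where
  "single_values K A = {x \<in> A. \<exists>c\<in>K. reachable_on K A ((\<lambda>_. 0)(c := x))}"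

lemma reachable_eq_reachable_on: "reachable n A = reachable_on {..<n} A"
proof -
  have "merge_result n A = merge_on {..<n} A"
    by (intro ext) (simp add: merge_result_def merge_on_def)
  then have "game_step n A = step_on {..<n} A"
    by (intro ext) (simp add: game_step_def step_on_def Bex_def)
  then show ?thesis
    by (intro ext) (simp add: reachable_def reachable_on_def)
qed

lemma Single_eq_Sup_single_values: "Single n A = Sup (enat ` single_values {..<n} A)"
proof -
  have "{enat x | x. x \<in> A \<and> (\<exists>c<n. reachable n A ((\<lambda>_. 0)(c := x)))}
      = enat ` single_values {..<n} A"
    unfolding single_values_def reachable_eq_reachable_on by auto
  then show ?thesis
    unfolding Single_def by simp
qed

lemma merge_onE:
  assumes "merge_on K A q q'"
  obtains C t where
    "\<forall>S\<in>C. S \<subseteq> {i \<in> K. q i \<noteq> 0}"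
    "\<forall>S\<in>C. \<forall>T\<in>C. S \<noteq> T \<longrightarrow> S \<inter> T = {}"
    "\<forall>S\<in>C. sum q S \<in> A"
    "\<forall>S\<in>C. t S \<in> S"
    "\<forall>S\<in>C. q' (t S) = sum q S \<and> (\<forall>j\<in>S - {t S}. q' j = 0)"
    "\<forall>j. j \<notin> \<Union>C \<longrightarrow> q' j = q j"
  using assms unfolding merge_on_def by (elim exE conjE) (rule that)

lemma merge_on_refl: "merge_on K A q q"
  unfolding merge_on_def by (intro exI[of _ "{}"]) simp

lemma step_on_place: "c \<in> K \<Longrightarrow> p c = 0 \<Longrightarrow> step_on K A p (p(c := 1))"
  unfolding step_on_def using merge_on_refl by blast

lemma step_on_support:
  assumes "step_on K A p p'" "\<forall>j. j \<notin> K \<longrightarrow> p j = 0"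
  shows "\<forall>j. j \<notin> K \<longrightarrow> p' j = 0"
proof -
  obtain c where c: "c \<in> K" "merge_on K A (p(c := 1)) p'"
    using assms(1) unfolding step_on_def by blast
  from c(2) obtain C where "\<forall>S\<in>C. S \<subseteq> K" "\<forall>j. j \<notin> \<Union>C \<longrightarrow> p' j = (p(c := 1)) j"
    by (rule merge_onE) blast
  then show ?thesis
    using assms(2) c(1) by fastforce
qed

lemma reachable_on_support:
  assumes "reachable_on K A p"
  shows "\<forall>j. j \<notin> K \<longrightarrow> p j = 0"
  using assms unfolding reachable_on_def
  by (induction rule: rtranclp_induct) (auto dest: step_on_support)

lemma merge_on_add_background:
  assumes m: "merge_on K A q q'" and b: "\<forall>j\<in>K. b j = 0" and KK': "K \<subseteq> K'"
  shows "merge_on K' A (\<lambda>j. q j + b j) (\<lambda>j. q' j + b j)"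
proof -
  obtain C t where C1: "\<forall>S\<in>C. S \<subseteq> {i \<in> K. q i \<noteq> 0}"
    and C2: "\<forall>S\<in>C. \<forall>T\<in>C. S \<noteq> T \<longrightarrow> S \<inter> T = {}"
    and C3: "\<forall>S\<in>C. sum q S \<in> A" and C4: "\<forall>S\<in>C. t S \<in> S"
    and C5: "\<forall>S\<in>C. q' (t S) = sum q S \<and> (\<forall>j\<in>S - {t S}. q' j = 0)"
    and C6: "\<forall>j. j \<notin> \<Union>C \<longrightarrow> q' j = q j"
    using m by (rule merge_onE)
  have b_S: "\<forall>j\<in>S. b j = 0" if "S \<in> C" for S
    using C1 b that by blast
  have sum_eq: "sum (\<lambda>j. q j + b j) S = sum q S" if "S \<in> C" for S
    using b_S[OF that] by (simp add: sum.distrib)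
  show ?thesis
    unfolding merge_on_def
  proof (intro exI[of _ C] exI[of _ t] conjI)
    show "\<forall>S\<in>C. S \<subseteq> {i \<in> K'. q i + b i \<noteq> 0}"
      using C1 KK' by fastforce
    show "\<forall>S\<in>C. sum (\<lambda>j. q j + b j) S \<in> A"
      using C3 sum_eq by simp
    show "\<forall>S\<in>C. q' (t S) + b (t S) = sum (\<lambda>j. q j + b j) S \<and>
        (\<forall>j\<in>S - {t S}. q' j + b j = 0)"
      using C4 C5 b_S sum_eq by simp
  qed (use C2 C4 C6 in auto)
qed

lemma steps_on_add_background:
  assumes "(step_on K A)\<^sup>*\<^sup>* p p'" and b: "\<forall>j\<in>K. b j = 0" and KK': "K \<subseteq> K'"
  shows "(step_on K' A)\<^sup>*\<^sup>* (\<lambda>j. p j + b j) (\<lambda>j. p' j + b j)"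
  using assms(1)
proof (induction rule: rtranclp_induct)
  case (step y z)
  then obtain c where c: "c \<in> K" "y c = 0" "merge_on K A (y(c := 1)) z"
    unfolding step_on_def by blast
  have "(\<lambda>j. y j + b j)(c := 1) = (\<lambda>j. (y(c := 1)) j + b j)"
    using b c(1) by auto
  then have "step_on K' A (\<lambda>j. y j + b j) (\<lambda>j. z j + b j)"
    unfolding step_on_def using c b KK' merge_on_add_background[OF c(3) b KK'] by auto
  with step.IH show ?case by simp
qed simp

lemma reachable_on_add_tile:
  assumes p: "reachable_on K A p" and c: "c \<notin> K" "insert c K \<subseteq> K'"
    and x: "reachable_on K' A ((\<lambda>_. 0)(c := x))"
  shows "reachable_on K' A (p(c := x))"
proof -
  let ?b = "(\<lambda>_. 0)(c := x)"
  have "(step_on K' A)\<^sup>*\<^sup>* (\<lambda>j. 0 + ?b j) (\<lambda>j. p j + ?b j)"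
    using p c unfolding reachable_on_def by (intro steps_on_add_background) auto
  moreover have "(\<lambda>j. p j + ?b j) = p(c := x)"
    using reachable_on_support[OF p] c(1) by auto
  ultimately have "(step_on K' A)\<^sup>*\<^sup>* ?b (p(c := x))"
    by (simp add: fun_upd_def)
  with x show ?thesis
    unfolding reachable_on_def by (rule rtranclp_trans)
qed

lemma single_values_mono:
  assumes "K \<subseteq> K'"
  shows "single_values K A \<subseteq> single_values K' A"
proof
  fix x assume "x \<in> single_values K A"
  then obtain c where c: "x \<in> A" "c \<in> K" "reachable_on K A ((\<lambda>_. 0)(c := x))"
    unfolding single_values_def by blast
  have "reachable_on K' A ((\<lambda>_. 0)(c := x))"
    using steps_on_add_background[OF c(3)[unfolded reachable_on_def], of "\<lambda>_. 0" K'] assms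
    by (simp add: reachable_on_def fun_upd_def)
  with c assms show "x \<in> single_values K' A"
    unfolding single_values_def by blast
qed

section \<open>Relabelling cells\<close>

definition relabel :: "(nat \<Rightarrow> nat) \<Rightarrow> nat set \<Rightarrow> nat set \<Rightarrow> (nat \<Rightarrow> nat) \<Rightarrow> nat \<Rightarrow> nat" where
  "relabel h K K' p = (\<lambda>j. if j \<in> K' then p (inv_into K h j) else 0)"

lemma relabel_apply: "bij_betw h K K' \<Longrightarrow> i \<in> K \<Longrightarrow> relabel h K K' p (h i) = p i"
  unfolding relabel_def by (auto simp: bij_betw_def inv_into_f_f)

lemma relabel_outside: "j \<notin> K' \<Longrightarrow> relabel h K K' p j = 0"
  unfolding relabel_def by simp

lemma relabel_zero: "relabel h K K' (\<lambda>_. 0) = (\<lambda>_. 0)"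
  unfolding relabel_def by auto

lemma relabel_fun_upd:
  assumes bij: "bij_betw h K K'" and c: "c \<in> K"
  shows "relabel h K K' (p(c := x)) = (relabel h K K' p)(h c := x)"
proof
  fix j
  show "relabel h K K' (p(c := x)) j = ((relabel h K K' p)(h c := x)) j"
  proof (cases "j \<in> K'")
    case True
    then obtain i where i: "i \<in> K" "j = h i"
      using bij by (auto simp: bij_betw_def)
    have "i = c \<longleftrightarrow> j = h c"
      using i c bij by (auto simp: bij_betw_def dest: inj_onD)
    then show ?thesis
      using i relabel_apply[OF bij] by auto
  next
    case False
    moreover have "h c \<in> K'"
      using bij c by (auto simp: bij_betw_def)
    ultimately show ?thesis
      by (auto simp: relabel_outside)
  qed
qed

lemma sum_relabel_image:
  assumes "bij_betw h K K'" "S \<subseteq> K"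
  shows "sum (relabel h K K' q) (h ` S) = sum q S"
proof -
  have "inj_on h S"
    using assms by (auto simp: bij_betw_def intro: inj_on_subset)
  then have "sum (relabel h K K' q) (h ` S) = sum (relabel h K K' q \<circ> h) S"
    by (rule sum.reindex)
  also have "\<dots> = sum q S"
    using assms relabel_apply by (intro sum.cong) auto
  finally show ?thesis .
qed

lemma relabel_merge_set:
  assumes bij: "bij_betw h K K'" and S: "S \<subseteq> {i \<in> K. q i \<noteq> 0}" "t \<in> S"
    and q': "q' t = sum q S" "\<forall>j\<in>S - {t}. q' j = 0"
  shows "h ` S \<subseteq> {i \<in> K'. relabel h K K' q i \<noteq> 0}"
    and "relabel h K K' q' (h t) = sum (relabel h K K' q) (h ` S)"
    and "\<forall>j\<in>h ` S - {h t}. relabel h K K' q' j = 0"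
proof -
  have SK: "S \<subseteq> K"
    using S(1) by blast
  have img: "h ` K = K'"
    using bij by (simp add: bij_betw_def)
  show "h ` S \<subseteq> {i \<in> K'. relabel h K K' q i \<noteq> 0}"
    using S(1) img relabel_apply[OF bij] by auto
  show "relabel h K K' q' (h t) = sum (relabel h K K' q) (h ` S)"
    using S(2) SK q'(1) relabel_apply[OF bij] sum_relabel_image[OF bij SK] by auto
  show "\<forall>j\<in>h ` S - {h t}. relabel h K K' q' j = 0"
  proof
    fix j assume "j \<in> h ` S - {h t}"
    then obtain i where "i \<in> S - {t}" "j = h i"
      by blast
    with SK q'(2) show "relabel h K K' q' j = 0"
      using relabel_apply[OF bij] by auto
  qed
qed

lemma relabel_eq_outside_image:
  assumes bij: "bij_betw h K K'" and eq: "\<forall>j. j \<notin> U \<longrightarrow> q' j = q j"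
  shows "\<forall>j. j \<notin> h ` U \<longrightarrow> relabel h K K' q' j = relabel h K K' q j"
proof (intro allI impI)
  fix j assume j: "j \<notin> h ` U"
  show "relabel h K K' q' j = relabel h K K' q j"
  proof (cases "j \<in> K'")
    case True
    then obtain i where i: "i \<in> K" "j = h i"
      using bij by (auto simp: bij_betw_def)
    with j eq show ?thesis
      using relabel_apply[OF bij] by auto
  qed (simp add: relabel_outside)
qed

lemma merge_on_relabel:
  assumes bij: "bij_betw h K K'" and m: "merge_on K A q q'"
  shows "merge_on K' A (relabel h K K' q) (relabel h K K' q')"
proof -
  obtain C t where C1: "\<forall>S\<in>C. S \<subseteq> {i \<in> K. q i \<noteq> 0}"
    and C2: "\<forall>S\<in>C. \<forall>T\<in>C. S \<noteq> T \<longrightarrow> S \<inter> T = {}"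
    and C3: "\<forall>S\<in>C. sum q S \<in> A" and C4: "\<forall>S\<in>C. t S \<in> S"
    and C5: "\<forall>S\<in>C. q' (t S) = sum q S \<and> (\<forall>j\<in>S - {t S}. q' j = 0)"
    and C6: "\<forall>j. j \<notin> \<Union>C \<longrightarrow> q' j = q j"
    using m by (rule merge_onE)
  have inj: "inj_on h K"
    using bij by (simp add: bij_betw_def)
  have SK: "S \<subseteq> K" if "S \<in> C" for S
    using C1 that by blast
  let ?r = "relabel h K K'"
  define t' where "t' S' = h (t (inv_into K h ` S'))" for S'
  have t'_image: "t' (h ` S) = h (t S)" if "S \<in> C" for S
    unfolding t'_def using inv_into_image_cancel[OF inj SK[OF that]] by simp
  show ?thesis
    unfolding merge_on_def
  proof (intro exI[of _ "(`) h ` C"] exI[of _ t'] conjI ballI)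
    fix S' assume "S' \<in> (`) h ` C"
    then obtain S where S: "S \<in> C" "S' = h ` S"
      by blast
    note image_props = relabel_merge_set[OF bij C1[rule_format, OF S(1)] C4[rule_format, OF S(1)]
        C5[rule_format, OF S(1), THEN conjunct1] C5[rule_format, OF S(1), THEN conjunct2]]
    show "S' \<subseteq> {i \<in> K'. ?r q i \<noteq> 0}"
      using image_props(1) S(2) by simp
    show "sum (?r q) S' \<in> A"
      using C3 S sum_relabel_image[OF bij SK] by simp
    show "t' S' \<in> S'"
      using C4 S t'_image by simp
    show "?r q' (t' S') = sum (?r q) S'"
      using image_props(2) S t'_image by simp
    fix j assume "j \<in> S' - {t' S'}"
    then show "?r q' j = 0"
      using image_props(3) S t'_image by simp
  next
    fix S' T' assume "S' \<in> (`) h ` C" "T' \<in> (`) h ` C"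
    then obtain S T where S: "S \<in> C" "S' = h ` S" and T: "T \<in> C" "T' = h ` T"
      by blast
    show "S' \<noteq> T' \<longrightarrow> S' \<inter> T' = {}"
    proof
      assume "S' \<noteq> T'"
      then have "S \<inter> T = {}"
        using S T C2 by blast
      then show "S' \<inter> T' = {}"
        using S T inj_on_image_Int[OF inj SK[OF S(1)] SK[OF T(1)]] by simp
    qed
  next
    show "\<forall>j. j \<notin> \<Union> ((`) h ` C) \<longrightarrow> ?r q' j = ?r q j"
      using relabel_eq_outside_image[OF bij C6] by (simp add: image_Union[symmetric])
  qed
qed

lemma reachable_on_relabel:
  assumes bij: "bij_betw h K K'" and "reachable_on K A p"
  shows "reachable_on K' A (relabel h K K' p)"
  using assms(2) unfolding reachable_on_def
proof (induction rule: rtranclp_induct)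
  case (step p p')
  then obtain c where c: "c \<in> K" "p c = 0" "merge_on K A (p(c := 1)) p'"
    unfolding step_on_def by blast
  then have "step_on K' A (relabel h K K' p) (relabel h K K' p')"
    unfolding step_on_def
    using bij merge_on_relabel[OF bij c(3)] relabel_fun_upd[OF bij c(1)] relabel_apply[OF bij c(1)]
    by (intro bexI[of _ "h c"]) (auto simp: bij_betw_def)
  with step.IH show ?case
    by simp
qed (simp add: relabel_zero)

lemma single_values_bij:
  assumes "bij_betw h K K'"
  shows "single_values K A \<subseteq> single_values K' A"
proof
  fix x assume "x \<in> single_values K A"
  then obtain c where c: "x \<in> A" "c \<in> K" "reachable_on K A ((\<lambda>_. 0)(c := x))"
    unfolding single_values_def by blast
  have "reachable_on K' A ((\<lambda>_. 0)(h c := x))"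
    using reachable_on_relabel[OF assms c(3)] by (simp add: relabel_fun_upd[OF assms c(2)] relabel_zero)
  moreover have "h c \<in> K'"
    using assms c(2) by (auto simp: bij_betw_def)
  ultimately show "x \<in> single_values K' A"
    using c(1) unfolding single_values_def by blast
qed

lemma single_values_card:
  assumes "finite K"
  shows "single_values K A = single_values {..<card K} A"
proof -
  obtain h where h: "bij_betw h K {..<card K}"
    using finite_same_card_bij[OF assms, of "{..<card K}"] by auto
  then have "bij_betw (inv_into K h) {..<card K} K"
    by (rule bij_betw_inv_into)
  with h show ?thesis
    using single_values_bij by blast
qed

lemma reachable_on_single:
  assumes "x \<in> single_values K A" "c \<in> K"
  shows "reachable_on K A ((\<lambda>_. 0)(c := x))"
proof -
  obtain c' where c': "c' \<in> K" "reachable_on K A ((\<lambda>_. 0)(c' := x))"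
    using assms(1) unfolding single_values_def by blast
  define swap where "swap i = (if i = c' then c else if i = c then c' else i)" for i
  have bij: "bij_betw swap K K"
    by (rule bij_betw_byWitness[of K swap swap]) (use assms(2) c'(1) in \<open>auto simp: swap_def\<close>)
  show ?thesis
    using reachable_on_relabel[OF bij c'(2)]
    by (simp add: relabel_fun_upd[OF bij c'(1)] relabel_zero swap_def)
qed

section \<open>Single merges and the total value\<close>

definition merged :: "(nat \<Rightarrow> nat) \<Rightarrow> nat set \<Rightarrow> nat \<Rightarrow> nat \<Rightarrow> nat" where
  "merged q S t = (\<lambda>j. if j = t then sum q S else if j \<in> S then 0 else q j)"

definition merge_one :: "nat set \<Rightarrow> nat set \<Rightarrow> (nat \<Rightarrow> nat) \<Rightarrow> (nat \<Rightarrow> nat) \<Rightarrow> bool" where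
  "merge_one K A q q' \<longleftrightarrow>
     (\<exists>S t. S \<subseteq> {i \<in> K. q i \<noteq> 0} \<and> sum q S \<in> A \<and> t \<in> S \<and> q' = merged q S t)"

lemma merge_one_restore:
  assumes "S \<subseteq> {i \<in> K. q i \<noteq> 0}" "sum q S \<in> A" "t \<in> S"
    and "q' t = sum q S" "\<forall>j\<in>S - {t}. q' j = 0"
  shows "merge_one K A (\<lambda>j. if j \<in> S then q j else q' j) q'"
proof -
  let ?q = "\<lambda>j. if j \<in> S then q j else q' j"
  have sum_S: "sum ?q S = sum q S"
    by (rule sum.cong) auto
  have "q' = merged ?q S t"
    using assms(4,5) unfolding merged_def sum_S by auto
  with assms(1-3) sum_S show ?thesis
    unfolding merge_one_def by (intro exI[of _ S] exI[of _ t]) auto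
qed

lemma merge_one_steps_if_disjoint:
  assumes "finite C" "\<forall>S\<in>C. S \<subseteq> {i \<in> K. q i \<noteq> 0}"
    "\<forall>S\<in>C. \<forall>T\<in>C. S \<noteq> T \<longrightarrow> S \<inter> T = {}"
    "\<forall>S\<in>C. sum q S \<in> A" "\<forall>S\<in>C. t S \<in> S"
    "\<forall>S\<in>C. q' (t S) = sum q S \<and> (\<forall>j\<in>S - {t S}. q' j = 0)"
    "\<forall>j. j \<notin> \<Union>C \<longrightarrow> q' j = q j"
  shows "(merge_one K A)\<^sup>*\<^sup>* q q'"
  using assms
proof (induction C arbitrary: q' rule: finite_induct)
  case empty
  then have "q' = q"
    by auto
  then show ?case
    by simp
next
  case (insert S0 C)
  define q'' where "q'' j = (if j \<in> S0 then q j else q' j)" for j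
  have disj: "S \<inter> S0 = {}" if "S \<in> C" for S
  proof -
    have "S \<noteq> S0"
      using that insert.hyps(2) by blast
    then show ?thesis
      using insert.prems(2) that by blast
  qed
  have "(merge_one K A)\<^sup>*\<^sup>* q q''"
  proof (rule insert.IH)
    show "\<forall>S\<in>C. q'' (t S) = sum q S \<and> (\<forall>j\<in>S - {t S}. q'' j = 0)"
    proof
      fix S assume S: "S \<in> C"
      then have "t S \<notin> S0" "\<forall>j\<in>S - {t S}. j \<notin> S0"
        using disj insert.prems(4) by blast+
      then show "q'' (t S) = sum q S \<and> (\<forall>j\<in>S - {t S}. q'' j = 0)"
        using insert.prems(5) S unfolding q''_def by simp
    qed
    show "\<forall>j. j \<notin> \<Union>C \<longrightarrow> q'' j = q j"
      using insert.prems(6) unfolding q''_def by auto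
  qed (use insert.prems in simp_all)
  moreover have "merge_one K A q'' q'"
    unfolding q''_def using insert.prems by (intro merge_one_restore[where t = "t S0"]) simp_all
  ultimately show ?case
    by (meson rtranclp.rtrancl_into_rtrancl)
qed

lemma merge_one_steps_if_merge_on:
  assumes "finite K" "merge_on K A q q'"
  shows "(merge_one K A)\<^sup>*\<^sup>* q q'"
  using assms(2)
proof (rule merge_onE)
  fix C t
  assume C: "\<forall>S\<in>C. S \<subseteq> {i \<in> K. q i \<noteq> 0}"
    and "\<forall>S\<in>C. \<forall>T\<in>C. S \<noteq> T \<longrightarrow> S \<inter> T = {}" "\<forall>S\<in>C. sum q S \<in> A" "\<forall>S\<in>C. t S \<in> S"
    "\<forall>S\<in>C. q' (t S) = sum q S \<and> (\<forall>j\<in>S - {t S}. q' j = 0)" "\<forall>j. j \<notin> \<Union>C \<longrightarrow> q' j = q j"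
  moreover have "finite C"
    using C assms(1) by (intro finite_subset[of C "Pow K"]) auto
  ultimately show ?thesis
    by (intro merge_one_steps_if_disjoint)
qed

lemma sum_merged:
  assumes "finite K" "S \<subseteq> K" "t \<in> S"
  shows "sum (merged q S t) K = sum q K"
proof -
  have fin_S: "finite S"
    using assms(1,2) by (rule finite_subset[rotated])
  have "sum (merged q S t) K = sum (merged q S t) (K - S) + sum (merged q S t) S"
    using sum.subset_diff[OF assms(2,1)] .
  also have "sum (merged q S t) (K - S) = sum q (K - S)"
    using assms(3) unfolding merged_def by (intro sum.cong) auto
  also have "sum (merged q S t) S = sum q S"
    using sum.remove[OF fin_S assms(3), of "merged q S t"] unfolding merged_def by simp
  also have "sum q (K - S) + sum q S = sum q K"
    using sum.subset_diff[OF assms(2,1), of q] by simp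
  finally show ?thesis .
qed

lemma sum_merge_on:
  assumes "finite K" "merge_on K A q q'"
  shows "sum q' K = sum q K"
  using merge_one_steps_if_merge_on[OF assms]
proof (induction rule: rtranclp_induct)
  case (step q' q'')
  then obtain S t where "S \<subseteq> K" "t \<in> S" "q'' = merged q' S t"
    unfolding merge_one_def by blast
  with step.IH show ?case
    using sum_merged[OF assms(1)] by simp
qed simp

lemma sum_step_on:
  assumes "finite K" "step_on K A p p'"
  shows "sum p' K = Suc (sum p K)"
proof -
  obtain c where c: "c \<in> K" "p c = 0" "merge_on K A (p(c := 1)) p'"
    using assms(2) unfolding step_on_def by blast
  then show ?thesis
    using sum_merge_on[OF assms(1) c(3)] by (simp add: sum.remove[OF assms(1)])
qed

lemma merge_on_all:
  assumes "finite K" "\<forall>j. j \<notin> K \<longrightarrow> q j = 0" "c \<in> K" "q c \<noteq> 0" "sum q K \<in> A"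
  shows "merge_on K A q ((\<lambda>_. 0)(c := sum q K))"
proof -
  define S where "S = {i \<in> K. q i \<noteq> 0}"
  have sum_S: "sum q S = sum q K"
    unfolding S_def using assms(1) by (intro sum.mono_neutral_left) auto
  have "c \<in> S"
    unfolding S_def using assms(3,4) by simp
  moreover have "q j = 0" if "j \<notin> S" for j
    using that assms(2) unfolding S_def by auto
  moreover have "S \<subseteq> {i \<in> K. q i \<noteq> 0}"
    unfolding S_def by simp
  ultimately show ?thesis
    unfolding merge_on_def using sum_S assms(5)
    by (intro exI[of _ "{S}"] exI[of _ "\<lambda>_. c"]) simp
qed

lemma single_values_if_le_sum:
  assumes fin: "finite K" and "0 \<notin> A" and "reachable_on K A p" and "x \<in> A" and "x \<le> sum p K"
  shows "x \<in> single_values K A"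
  using assms(3-5) unfolding reachable_on_def
proof (induction arbitrary: x rule: rtranclp_induct)
  case base
  with \<open>0 \<notin> A\<close> show ?case
    by simp
next
  case (step p p')
  show ?case
  proof (cases "x \<le> sum p K")
    case True
    with step show ?thesis
      by blast
  next
    case False
    obtain c where c: "c \<in> K" "p c = 0"
      using step(2) unfolding step_on_def by blast
    have "x = sum (p(c := 1)) K"
      using False step.prems(2) sum_step_on[OF fin step(2)] c
      by (simp add: sum.remove[OF fin c(1)])
    moreover have "\<forall>j. j \<notin> K \<longrightarrow> (p(c := 1)) j = 0"
      using reachable_on_support[unfolded reachable_on_def, OF step(1)] c(1) by auto
    ultimately have "merge_on K A (p(c := 1)) ((\<lambda>_. 0)(c := x))"
      using merge_on_all[OF fin _ c(1), of "p(c := 1)"] step.prems(1) by simp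
    then have "step_on K A p ((\<lambda>_. 0)(c := x))"
      unfolding step_on_def using c by blast
    then have "reachable_on K A ((\<lambda>_. 0)(c := x))"
      unfolding reachable_on_def by (rule rtranclp.rtrancl_into_rtrancl[OF step(1)])
    with c(1) step.prems(1) show ?thesis
      unfolding single_values_def by blast
  qed
qed

lemma single_values_downward_closed:
  assumes "finite K" "0 \<notin> A" "y \<in> single_values K A" "x \<in> A" "x \<le> y"
  shows "x \<in> single_values K A"
proof -
  obtain c where c: "c \<in> K" "reachable_on K A ((\<lambda>_. 0)(c := y))"
    using assms(3) unfolding single_values_def by blast
  have "sum ((\<lambda>_. 0)(c := y)) K = y"
    using assms(1) c(1) by (simp add: sum.remove)
  with assms c(2) show ?thesis
    using single_values_if_le_sum by simp
qed

lemma one_in_single_values: "1 \<in> A \<Longrightarrow> c \<in> K \<Longrightarrow> 1 \<in> single_values K A"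
  unfolding single_values_def reachable_on_def using step_on_place[of c K "\<lambda>_. 0" A] by auto

section \<open>The admissibility invariant\<close>

definition count_at_least :: "nat set \<Rightarrow> (nat \<Rightarrow> nat) \<Rightarrow> nat \<Rightarrow> nat" where
  "count_at_least K q c = card {d \<in> K. d \<noteq> c \<and> q c \<le> q d}"

text \<open>Among equal values the tile at cell c is placed first in the sorted order, so it has
  sorted index card K - count_at_least K q c (counting from 1).\<close>

definition admissible :: "nat set \<Rightarrow> nat set \<Rightarrow> (nat \<Rightarrow> nat) \<Rightarrow> bool" where
  "admissible K A q \<longleftrightarrow>
     (\<forall>c\<in>K. q c \<noteq> 0 \<longrightarrow> q c \<in> single_values {..<card K - count_at_least K q c} A)"

lemma count_at_least_le:
  assumes "finite K" "c \<in> K"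
  shows "count_at_least K q c \<le> card K - 1"
proof -
  have "count_at_least K q c \<le> card (K - {c})"
    unfolding count_at_least_def using assms(1) by (intro card_mono) auto
  with assms show ?thesis
    by simp
qed

lemma single_values_mono_diff:
  "k \<le> l \<Longrightarrow> x \<in> single_values {..<n - l} A \<Longrightarrow> x \<in> single_values {..<n - k} A"
  using single_values_mono[of "{..<n - l}" "{..<n - k}" A] diff_le_mono2[of k l n] by auto

lemma admissible_remove_max:
  assumes fin: "finite K" and c: "c \<in> K" "\<forall>d\<in>K. q d \<le> q c" and adm: "admissible K A q"
  shows "admissible (K - {c}) A (q(c := 0))"
  unfolding admissible_def
proof (intro ballI impI)
  fix d assume d: "d \<in> K - {c}" "(q(c := 0)) d \<noteq> 0"
  have "{e \<in> K. e \<noteq> d \<and> q d \<le> q e} = insert c {e \<in> K - {c}. e \<noteq> d \<and> q d \<le> (q(c := 0)) e}"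
    using d c by auto
  then have "count_at_least K q d = Suc (count_at_least (K - {c}) (q(c := 0)) d)"
    unfolding count_at_least_def using fin d(1) by simp
  moreover have "card (K - {c}) = card K - 1"
    using fin c(1) by simp
  ultimately have "card K - count_at_least K q d
      = card (K - {c}) - count_at_least (K - {c}) (q(c := 0)) d"
    by simp
  with adm d show "(q(c := 0)) d
      \<in> single_values {..<card (K - {c}) - count_at_least (K - {c}) (q(c := 0)) d} A"
    unfolding admissible_def by auto
qed

lemma admissible_tile_in_single_values:
  assumes "finite K" "c \<in> K" "q c \<noteq> 0" "admissible K A q"
  shows "q c \<in> single_values K A"
proof -
  have "q c \<in> single_values {..<card K - count_at_least K q c} A"
    using assms(2-4) unfolding admissible_def by blast
  also have "\<dots> \<subseteq> single_values {..<card K} A"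
    by (rule single_values_mono) auto
  finally show ?thesis
    using single_values_card[OF assms(1)] by simp
qed

lemma reachable_on_if_admissible:
  assumes "finite K" "\<forall>j. j \<notin> K \<longrightarrow> q j = 0" "admissible K A q"
  shows "reachable_on K A q"
  using assms
proof (induction "card K" arbitrary: K q rule: less_induct)
  case less
  show ?case
  proof (cases "\<forall>c\<in>K. q c = 0")
    case True
    with less.prems(2) have "q = (\<lambda>_. 0)"
      by auto
    then show ?thesis
      unfolding reachable_on_def by simp
  next
    case False
    then obtain c0 where c0: "c0 \<in> K" "q c0 \<noteq> 0"
      by blast
    obtain c where c: "c \<in> K" "q c = Max (q ` K)"
      using Max_in[of "q ` K"] less.prems(1) c0(1) by fastforce
    then have c_max: "\<forall>d\<in>K. q d \<le> q c"
      using less.prems(1) by simp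
    with c0 have "q c \<noteq> 0"
      by fastforce
    have "card (K - {c}) < card K"
      using less.prems(1) c(1) by (rule card_Diff1_less)
    then have "reachable_on (K - {c}) A (q(c := 0))"
      using less.prems admissible_remove_max[OF less.prems(1) c(1) c_max less.prems(3)]
      by (intro less.hyps) auto
    moreover have "reachable_on K A ((\<lambda>_. 0)(c := q c))"
      using admissible_tile_in_single_values[OF less.prems(1) c(1) \<open>q c \<noteq> 0\<close> less.prems(3)] c(1)
      by (rule reachable_on_single)
    ultimately show ?thesis
      using reachable_on_add_tile[of "K - {c}" A "q(c := 0)" c K "q c"] c(1) by auto
  qed
qed

lemma admissible_place:
  assumes fin: "finite K" and "1 \<in> A" and adm: "admissible K A p" and c: "c \<in> K" "p c = 0"
  shows "admissible K A (p(c := 1))"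
  unfolding admissible_def
proof (intro ballI impI)
  fix d assume d: "d \<in> K" "(p(c := 1)) d \<noteq> 0"
  show "(p(c := 1)) d \<in> single_values {..<card K - count_at_least K (p(c := 1)) d} A"
  proof (cases "(p(c := 1)) d = 1")
    case True
    have "0 < card K"
      using fin d(1) by (auto simp: card_gt_0_iff)
    then have "count_at_least K (p(c := 1)) d < card K"
      using count_at_least_le[OF fin d(1), of "p(c := 1)"] by linarith
    then have "0 \<in> {..<card K - count_at_least K (p(c := 1)) d}"
      by simp
    with True \<open>1 \<in> A\<close> show ?thesis
      using one_in_single_values by metis
  next
    case False
    with d(2) have "d \<noteq> c" "2 \<le> p d"
      by (auto split: if_splits)
    then have "count_at_least K (p(c := 1)) d = count_at_least K p d"
      unfolding count_at_least_def using c(2) by (intro arg_cong[where f = card]) auto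
    with adm d \<open>d \<noteq> c\<close> show ?thesis
      unfolding admissible_def by auto
  qed
qed

lemma admissible_restrict:
  assumes fin: "finite K" and adm: "admissible K A p" and S: "S \<subseteq> {i \<in> K. p i \<noteq> 0}"
    and a: "\<forall>e\<in>S. p e \<le> a"
  defines "E \<equiv> {d \<in> K - S. a \<le> p d}"
  shows "admissible (K - E) A (\<lambda>i. if i \<in> S then p i else 0)"
  unfolding admissible_def
proof (intro ballI impI)
  let ?q = "\<lambda>i. if i \<in> S then p i else 0"
  fix c assume c: "c \<in> K - E" "?q c \<noteq> 0"
  then have "c \<in> S"
    by (auto split: if_splits)
  define Sc where "Sc = {d \<in> S. d \<noteq> c \<and> p c \<le> p d}"
  have "{d \<in> K - E. d \<noteq> c \<and> ?q c \<le> ?q d} = Sc"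
    using \<open>c \<in> S\<close> S unfolding Sc_def E_def by auto
  then have count_eq: "count_at_least (K - E) ?q c = card Sc"
    unfolding count_at_least_def by simp
  have "Sc \<union> E \<subseteq> {d \<in> K. d \<noteq> c \<and> p c \<le> p d}"
    using S \<open>c \<in> S\<close> a unfolding Sc_def E_def by fastforce
  then have "card (Sc \<union> E) \<le> count_at_least K p c"
    unfolding count_at_least_def using fin by (intro card_mono) auto
  moreover have "card (Sc \<union> E) = card Sc + card E"
    using fin S unfolding Sc_def E_def by (intro card_Un_disjoint) (auto intro: finite_subset)
  moreover have "card (K - E) = card K - card E"
    using fin unfolding E_def by (intro card_Diff_subset) auto
  ultimately have "card K - count_at_least K p c \<le> card (K - E) - count_at_least (K - E) ?q c"
    unfolding count_eq by linarith
  moreover have "p c \<in> single_values {..<card K - count_at_least K p c} A"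
    using adm S \<open>c \<in> S\<close> unfolding admissible_def by blast
  ultimately show "?q c \<in> single_values {..<card (K - E) - count_at_least (K - E) ?q c} A"
    using \<open>c \<in> S\<close> single_values_mono[of "{..<card K - count_at_least K p c}"] by auto
qed

lemma merged_value_in_single_values:
  assumes fin: "finite K" and "0 \<notin> A" and adm: "admissible K A p"
    and S: "S \<subseteq> {i \<in> K. p i \<noteq> 0}" "sum p S \<in> A" and a: "\<forall>e\<in>S. p e \<le> a"
  shows "sum p S \<in> single_values {..<card K - card {d \<in> K - S. a \<le> p d}} A"
proof -
  define E where "E = {d \<in> K - S. a \<le> p d}"
  let ?q = "\<lambda>i. if i \<in> S then p i else 0"
  have "reachable_on (K - E) A ?q"
    using fin S(1) admissible_restrict[OF fin adm S(1) a] unfolding E_def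
    by (intro reachable_on_if_admissible) auto
  moreover have "sum ?q (K - E) = sum p S"
  proof -
    have "sum ?q (K - E) = sum p ((K - E) \<inter> S)"
      using fin by (simp add: sum.inter_restrict)
    also have "(K - E) \<inter> S = S"
      using S(1) unfolding E_def by blast
    finally show ?thesis .
  qed
  ultimately have "sum p S \<in> single_values (K - E) A"
    using single_values_if_le_sum[OF _ \<open>0 \<notin> A\<close> _ S(2)] fin by simp
  moreover have "card (K - E) = card K - card E"
    using fin unfolding E_def by (intro card_Diff_subset) auto
  ultimately show ?thesis
    using single_values_card[of "K - E"] fin unfolding E_def by simp
qed

lemma at_least_merged_subset:
  assumes "d \<notin> S" "p d \<noteq> 0"
  shows "{e \<in> K. e \<noteq> d \<and> p d \<le> merged p S t e} \<subseteq> insert t ({e \<in> K. e \<noteq> d \<and> p d \<le> p e} - S)"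
  using assms unfolding merged_def by auto

lemma count_at_least_merged_target:
  assumes fin: "finite K" and "t \<in> S" and a: "a \<le> sum p S" and "sum p S \<noteq> 0"
  shows "count_at_least K (merged p S t) t \<le> card {d \<in> K - S. a \<le> p d}"
  unfolding count_at_least_def using fin
proof (intro card_mono)
  show "{e \<in> K. e \<noteq> t \<and> merged p S t t \<le> merged p S t e} \<subseteq> {d \<in> K - S. a \<le> p d}"
    using \<open>t \<in> S\<close> a \<open>sum p S \<noteq> 0\<close> unfolding merged_def by auto
qed simp

lemma count_at_least_merged_le:
  assumes fin: "finite K" and "t \<in> S" "S \<subseteq> K" and d: "d \<in> K - S" "p d \<noteq> 0"
    and large: "sum p S < p d \<or> (\<exists>e\<in>S. p d \<le> p e)"
  shows "count_at_least K (merged p S t) d \<le> count_at_least K p d"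
proof -
  let ?N = "{e \<in> K. e \<noteq> d \<and> merged p S t d \<le> merged p S t e}"
  let ?O = "{e \<in> K. e \<noteq> d \<and> p d \<le> p e}"
  have merged_d: "merged p S t d = p d"
    using d \<open>t \<in> S\<close> unfolding merged_def by auto
  have N_sub: "?N \<subseteq> insert t (?O - S)"
    using at_least_merged_subset[of d S p K t] d unfolding merged_d by blast
  have fin_O: "finite ?O"
    using fin by simp
  from large have "card ?N \<le> card ?O"
  proof
    assume "sum p S < p d"
    then have "t \<notin> ?N"
      using merged_d \<open>t \<in> S\<close> unfolding merged_def by auto
    with N_sub have "?N \<subseteq> ?O"
      by blast
    with fin_O show ?thesis
      by (rule card_mono)
  next
    assume "\<exists>e\<in>S. p d \<le> p e"
    then obtain e where e: "e \<in> S" "p d \<le> p e"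
      by blast
    have "card ?N \<le> card (insert t (?O - S))"
      using N_sub fin_O by (intro card_mono) auto
    also have "\<dots> \<le> Suc (card (?O - S))"
      using fin_O by (simp add: card_insert_if)
    also have "\<dots> = card (insert e (?O - S))"
      using e fin_O by simp
    also have "\<dots> \<le> card ?O"
      using e d \<open>S \<subseteq> K\<close> fin_O by (intro card_mono) auto
    finally show ?thesis .
  qed
  then show ?thesis
    unfolding count_at_least_def merged_d .
qed

lemma count_at_least_merged_le_card:
  assumes fin: "finite K" and "t \<in> S" and d: "d \<in> K - S" "p d \<noteq> 0" "a \<le> p d"
  shows "count_at_least K (merged p S t) d \<le> card {e \<in> K - S. a \<le> p e}"
proof -
  let ?E = "{e \<in> K - S. a \<le> p e}"
  have merged_d: "merged p S t d = p d"
    using d \<open>t \<in> S\<close> unfolding merged_def by auto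
  have "{e \<in> K. e \<noteq> d \<and> p d \<le> p e} - S \<subseteq> ?E - {d}"
    using d by auto
  then have "{e \<in> K. e \<noteq> d \<and> merged p S t d \<le> merged p S t e} \<subseteq> insert t (?E - {d})"
    using at_least_merged_subset[of d S p K t] d unfolding merged_d by blast
  then have "count_at_least K (merged p S t) d \<le> card (insert t (?E - {d}))"
    unfolding count_at_least_def using fin by (intro card_mono) auto
  also have "\<dots> \<le> Suc (card (?E - {d}))"
    using fin by (simp add: card_insert_if)
  also have "\<dots> = card ?E"
    using d fin by (intro card_Suc_Diff1) auto
  finally show ?thesis .
qed

lemma count_at_least_merged_cases:
  assumes fin: "finite K" and S: "S \<subseteq> K" "t \<in> S" and a: "\<forall>e\<in>S. p e \<le> a" "a \<in> p ` S"
    and d: "d \<in> K" "merged p S t d \<noteq> 0"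
  shows "merged p S t d = p d \<and> count_at_least K (merged p S t) d \<le> count_at_least K p d \<or>
    merged p S t d \<le> sum p S \<and> count_at_least K (merged p S t) d \<le> card {e \<in> K - S. a \<le> p e}"
proof -
  have fin_S: "finite S"
    using fin S(1) by (rule finite_subset[rotated])
  have "a \<le> sum p S"
    using a(2) fin_S by (auto intro: member_le_sum)
  show ?thesis
  proof (cases "d \<in> S")
    case True
    with d(2) have "d = t" "sum p S \<noteq> 0"
      unfolding merged_def by (auto split: if_splits)
    then show ?thesis
      using count_at_least_merged_target[OF fin S(2) \<open>a \<le> sum p S\<close>] unfolding merged_def by simp
  next
    case False
    then have merged_d: "merged p S t d = p d"
      using S(2) unfolding merged_def by auto
    with d have "d \<in> K - S" "p d \<noteq> 0"
      using False by simp_all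
    show ?thesis
    proof (cases "sum p S < p d \<or> (\<exists>e\<in>S. p d \<le> p e)")
      case True
      with count_at_least_merged_le[where p = p and d = d, OF fin S(2,1)] \<open>d \<in> K - S\<close>
        \<open>p d \<noteq> 0\<close> merged_d
      show ?thesis
        by simp
    next
      case False
      then have "p d \<le> sum p S" "a \<le> p d"
        using a(2) by auto
      then show ?thesis
        using count_at_least_merged_le_card[where p = p and d = d, OF fin S(2)] \<open>d \<in> K - S\<close>
          \<open>p d \<noteq> 0\<close> merged_d by simp
    qed
  qed
qed

lemma admissible_merged:
  assumes fin: "finite K" and "0 \<notin> A" and adm: "admissible K A p"
    and S: "S \<subseteq> {i \<in> K. p i \<noteq> 0}" "sum p S \<in> A" "t \<in> S"
  shows "admissible K A (merged p S t)"
  unfolding admissible_def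
proof (intro ballI impI)
  fix d assume d: "d \<in> K" "merged p S t d \<noteq> 0"
  define a where "a = Max (p ` S)"
  have fin_S: "finite S"
    using fin S(1) by (auto intro: finite_subset)
  have a: "\<forall>e\<in>S. p e \<le> a" "a \<in> p ` S"
    unfolding a_def using fin_S S(3) by (auto intro: Max_in)
  have old: "p d \<in> single_values {..<card K - count_at_least K p d} A" if "p d \<noteq> 0"
    using adm d(1) that unfolding admissible_def by simp
  have "merged p S t d \<in> A"
  proof (cases "d = t")
    case True
    then show ?thesis
      using S(2) unfolding merged_def by simp
  next
    case False
    with d(2) have "merged p S t d = p d" "p d \<noteq> 0"
      unfolding merged_def by (auto split: if_splits)
    then show ?thesis
      using old unfolding single_values_def by auto
  qed
  have "S \<subseteq> K"
    using S(1) by blast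
  from count_at_least_merged_cases[OF fin this S(3) a d]
  show "merged p S t d \<in> single_values {..<card K - count_at_least K (merged p S t) d} A"
  proof (elim disjE conjE)
    assume "merged p S t d = p d" "count_at_least K (merged p S t) d \<le> count_at_least K p d"
    with d(2) old show ?thesis
      by (auto intro: single_values_mono_diff)
  next
    assume "merged p S t d \<le> sum p S"
      and "count_at_least K (merged p S t) d \<le> card {e \<in> K - S. a \<le> p e}"
    from this(2) have "sum p S \<in> single_values {..<card K - count_at_least K (merged p S t) d} A"
      using merged_value_in_single_values[OF fin \<open>0 \<notin> A\<close> adm S(1,2) a(1)]
      by (rule single_values_mono_diff)
    with \<open>merged p S t d \<le> sum p S\<close> \<open>merged p S t d \<in> A\<close> show ?thesis
      using single_values_downward_closed[OF _ \<open>0 \<notin> A\<close>] by simp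
  qed
qed

lemma admissible_merge_one_steps:
  assumes "finite K" "0 \<notin> A" "(merge_one K A)\<^sup>*\<^sup>* q q'" "admissible K A q"
  shows "admissible K A q'"
  using assms(3,4)
proof (induction rule: rtranclp_induct)
  case (step q' q'')
  then show ?case
    unfolding merge_one_def using admissible_merged[OF assms(1,2)] by blast
qed

lemma admissible_if_reachable_on:
  assumes "finite K" "0 \<notin> A" "1 \<in> A" "reachable_on K A p"
  shows "admissible K A p"
  using assms(4) unfolding reachable_on_def
proof (induction rule: rtranclp_induct)
  case base
  show ?case
    unfolding admissible_def by simp
next
  case (step p p')
  then obtain c where c: "c \<in> K" "p c = 0" "merge_on K A (p(c := 1)) p'"
    unfolding step_on_def by blast
  have "admissible K A (p(c := 1))"
    using admissible_place[OF assms(1,3) step.IH c(1,2)] .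
  then show ?case
    by (rule admissible_merge_one_steps[OF assms(1,2) merge_one_steps_if_merge_on[OF assms(1) c(3)]])
qed

section \<open>Sorted values and Single\<close>

lemma reachable_on_iff_admissible:
  assumes "finite K" "0 \<notin> A" "1 \<in> A" "\<forall>j. j \<notin> K \<longrightarrow> p j = 0"
  shows "reachable_on K A p \<longleftrightarrow> admissible K A p"
  using admissible_if_reachable_on[OF assms(1-3)] reachable_on_if_admissible[OF assms(1,4)] by blast

text \<open>Single-tile values are downward closed in A, so lying below their supremum is membership.\<close>

lemma le_Single_iff:
  assumes "0 \<notin> A" "x \<in> A"
  shows "enat x \<le> Single i A \<longleftrightarrow> x \<in> single_values {..<i} A"
proof
  assume "x \<in> single_values {..<i} A"
  then show "enat x \<le> Single i A"
    unfolding Single_eq_Sup_single_values by (simp add: Sup_upper)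
next
  assume le: "enat x \<le> Single i A"
  show "x \<in> single_values {..<i} A"
  proof (rule ccontr)
    assume "x \<notin> single_values {..<i} A"
    then have "\<forall>y\<in>single_values {..<i} A. y < x"
      using single_values_downward_closed[OF finite_lessThan assms(1) _ assms(2)] not_le_imp_less
      by blast
    then have "Single i A \<le> enat (x - 1)"
      unfolding Single_eq_Sup_single_values by (intro Sup_least) auto
    moreover have "x \<noteq> 0"
      using assms by metis
    ultimately show False
      using le by (cases "Single i A") auto
  qed
qed

lemma sorted_length_filter_ge_nth:
  fixes s :: "nat list"
  assumes "sorted s" "k < length s"
  shows "length s - k \<le> length (filter (\<lambda>z. s ! k \<le> z) s)"
proof -
  have "{k..<length s} \<subseteq> {i. i < length s \<and> s ! k \<le> s ! i}"
    using sorted_nth_mono[OF assms(1)] by auto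
  then have "card {k..<length s} \<le> card {i. i < length s \<and> s ! k \<le> s ! i}"
    by (intro card_mono) auto
  then show ?thesis
    by (simp add: length_filter_conv_card)
qed

lemma sorted_length_filter_ge_le:
  fixes s :: "nat list"
  assumes "sorted s" "k < length s" "s ! k < x"
  shows "length (filter (\<lambda>z. x \<le> z) s) \<le> length s - Suc k"
proof -
  have "{i. i < length s \<and> x \<le> s ! i} \<subseteq> {Suc k..<length s}"
  proof
    fix i assume i: "i \<in> {i. i < length s \<and> x \<le> s ! i}"
    have "\<not> i \<le> k"
    proof
      assume "i \<le> k"
      then have "s ! i \<le> s ! k"
        using sorted_nth_mono[OF assms(1) _ assms(2)] by blast
      with i assms(3) show False
        by simp
    qed
    with i show "i \<in> {Suc k..<length s}"
      by auto
  qed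
  then have "card {i. i < length s \<and> x \<le> s ! i} \<le> card {Suc k..<length s}"
    by (intro card_mono) auto
  then show ?thesis
    by (simp add: length_filter_conv_card)
qed

lemma length_filter_ge_sort:
  assumes "c < n"
  shows "length (filter (\<lambda>z. P c \<le> z) (sort (map P [0..<n]))) = Suc (count_at_least {..<n} P c)"
proof -
  have "length (filter (\<lambda>z. P c \<le> z) (sort (map P [0..<n])))
      = card {i. i < n \<and> P c \<le> map P [0..<n] ! i}"
    by (simp add: filter_sort length_filter_conv_card)
  also have "{i. i < n \<and> P c \<le> map P [0..<n] ! i} = insert c {d \<in> {..<n}. d \<noteq> c \<and> P c \<le> P d}"
    using assms by auto
  finally show ?thesis
    unfolding count_at_least_def by simp
qed

lemma sorted_bound_if_admissible:
  assumes "0 \<notin> A" "admissible {..<n} A P" "i \<in> {1..n}"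
  shows "enat (sort (map P [0..<n]) ! (i - 1)) \<le> Single i A"
proof -
  define s where "s = sort (map P [0..<n])"
  define k where "k = i - 1"
  have k: "k < n" "i = Suc k"
    using assms(3) unfolding k_def by auto
  show ?thesis
  proof (cases "s ! k = 0")
    case True
    then show ?thesis
      unfolding s_def k_def by (simp add: zero_enat_def[symmetric])
  next
    case False
    have "s ! k \<in> set s"
      using k unfolding s_def by (intro nth_mem) simp
    then obtain c where c: "c < n" "s ! k = P c"
      unfolding s_def by auto
    have "n - k \<le> Suc (count_at_least {..<n} P c)"
      using sorted_length_filter_ge_nth[of s k] k length_filter_ge_sort[OF c(1)] c(2)
      unfolding s_def by simp
    then have "card {..<n} - count_at_least {..<n} P c \<le> i"
      using k by simp
    moreover have "P c \<in> single_values {..<card {..<n} - count_at_least {..<n} P c} A"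
      using assms(2) c False unfolding admissible_def by auto
    ultimately have "s ! k \<in> single_values {..<i} A"
      using single_values_mono[of "{..<card {..<n} - count_at_least {..<n} P c}" "{..<i}" A] c(2)
      by auto
    moreover from this have "s ! k \<in> A"
      unfolding single_values_def by blast
    ultimately show ?thesis
      using le_Single_iff[OF assms(1)] unfolding s_def k_def by simp
  qed
qed

lemma admissible_if_sorted_bound:
  assumes "0 \<notin> A" "\<forall>c<n. P c = 0 \<or> P c \<in> A"
    and bound: "\<forall>i\<in>{1..n}. enat (sort (map P [0..<n]) ! (i - 1)) \<le> Single i A"
  shows "admissible {..<n} A P"
  unfolding admissible_def
proof (intro ballI impI)
  define s where "s = sort (map P [0..<n])"
  fix c assume c: "c \<in> {..<n}" "P c \<noteq> 0"
  define k where "k = n - Suc (count_at_least {..<n} P c)"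
  have count_le: "count_at_least {..<n} P c \<le> n - 1"
    using count_at_least_le[of "{..<n}" c P] c by simp
  then have k: "k < n" "Suc k = card {..<n} - count_at_least {..<n} P c"
    using c unfolding k_def by auto
  have "P c \<le> s ! k"
  proof (rule ccontr)
    assume "\<not> P c \<le> s ! k"
    then have "Suc (count_at_least {..<n} P c) \<le> n - Suc k"
      using sorted_length_filter_ge_le[of s k "P c"] length_filter_ge_sort[of c n P] k c(1)
      unfolding s_def by simp
    with count_le show False
      unfolding k_def by simp
  qed
  moreover have "s ! k \<in> A"
  proof -
    have "s ! k \<in> set s"
      using k unfolding s_def by (intro nth_mem) simp
    with assms(2) \<open>P c \<le> s ! k\<close> c(2) show ?thesis
      unfolding s_def by auto
  qed
  moreover have "enat (s ! k) \<le> Single (Suc k) A"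
    using bound[rule_format, of "Suc k"] k(1) unfolding s_def by simp
  ultimately have "P c \<in> single_values {..<Suc k} A"
    using le_Single_iff[OF assms(1)] single_values_downward_closed[OF _ assms(1)] assms(2) c
    by (metis finite_lessThan lessThan_iff)
  then show "P c \<in> single_values {..<card {..<n} - count_at_least {..<n} P c} A"
    unfolding k(2) .
qed

theorem mainTheorem6:
  fixes n :: nat and A :: "nat set" and P :: "nat \<Rightarrow> nat"
  assumes "n \<ge> 1" and "0 \<notin> A" and "1 \<in> A"
    and "is_position n A P"
  shows "reachable n A P \<longleftrightarrow>
           (\<forall>i\<in>{1..n}. enat (sort (map P [0..<n]) ! (i - 1)) \<le> Single i A)"
proof -
  have support: "\<forall>j. j \<notin> {..<n} \<longrightarrow> P j = 0" and cell_values: "\<forall>c<n. P c = 0 \<or> P c \<in> A"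
    using assms(4) unfolding is_position_def by auto
  have "reachable n A P \<longleftrightarrow> admissible {..<n} A P"
    unfolding reachable_eq_reachable_on
    by (rule reachable_on_iff_admissible[OF finite_lessThan assms(2,3) support])
  also have "\<dots> \<longleftrightarrow> (\<forall>i\<in>{1..n}. enat (sort (map P [0..<n]) ! (i - 1)) \<le> Single i A)"
    using sorted_bound_if_admissible[OF assms(2)] admissible_if_sorted_bound[OF assms(2) cell_values]
    by blast
  finally show ?thesis .
qed

end
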